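(* Let $M$ be any finite message set containing distinct messages $m_L,m_R$. Then $\sigma_L$ and $\sigma_R$ are neutrally stable strategies of $\langle\Gamma,M\rangle$. Moreover, if $M=\{m_L,m_R\}$, then $\sigma_L$ and $\sigma_R$ are evolutionarily stable strategies.
   Context: Game $\langle\Gamma,M\rangle$: two players; types drawn independently from a distribution on $U=[0,1]$ with continuous CDF $F$ and density $f>0$ on $[0,1]$. Each chooses $L$ or $R$; a player of type $u$ gets $1-u$ if both choose $L$, $u$ if both choose $R$, and $0$ otherwise. After learning types, players simultaneously send publicly observed costless messages from $M$. A strategy is $\sigma=(\mu,\xi)$ with $\mu:U\to\Delta(M)$ measurable ($\mu_u(m)$ = probability type $u$ sends $m$) and $\xi:M\times M\to[0,1]$: a player who sent $m$ and observes $m'$ plays $L$ iff her type $u\le\xi(m,m')$. $\Sigma$ is the set of strategies. $\bar\mu(m)=\int_0^1\mu_u(m)f(u)du$, $\mathrm{supp}(\bar\mu)=\{m:\bar\mu(m)>0\}$. For $m\in\mathrm{supp}(\bar\mu)$, $F_m$ is the CDF with density $f(u)\mu_u(m)/\bar\mu(m)$. Payoffs: $\pi_{u,v}(\sigma,\sigma')=\sum_{m,m'}\mu_u(m)\mu'_v(m')[(1-u)\mathbf 1\{u\le\xi(m,m')\}\mathbf 1\{v\le\xi'(m',m)\}+u\mathbf 1\{u>\xi(m,m')\}\mathbf 1\{v>\xi'(m',m)\}]$, $\pi_u(\sigma,\sigma')=\int_0^1\pi_{u,v}f(v)dv$, $\pi(\sigma,\sigma')=\int_0^1\pi_u(\sigma,\sigma')f(u)du$.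 $\sigma\in\mathcal E$ (equilibrium) if $\pi_u(\sigma,\sigma)\ge\pi_u(\sigma',\sigma)$ for all $u,\sigma'$. $\sigma=(\mu,\xi)$ and $\tilde\sigma=(\tilde\mu,\tilde\xi)$ are equivalent ($\sigma\approx\tilde\sigma$) if for almost all types $u$ (w.r.t. $f$), $\mu_u(m)=\tilde\mu_u(m)$ for all $m\in M$, and $F_m(\xi(m,m'))=F_m(\tilde\xi(m,m'))$ for all $m,m'\in\mathrm{supp}(\bar\mu)$. An equilibrium strategy $\sigma$ is neutrally stable if for every $\tilde\sigma\not\approx\sigma$, $\pi(\tilde\sigma,\sigma)=\pi(\sigma,\sigma)$ implies $\pi(\sigma,\tilde\sigma)\ge\pi(\tilde\sigma,\tilde\sigma)$; it is evolutionarily stable if moreover the last inequality is strict. $\mu^*(u)=m_L$ if $u\le1/2$, $m_R$ if $u>1/2$ (with probability one). $\xi_L(m,m')=0$ if $m=m'=m_R$ and $1$ otherwise; $\xi_R(m,m')=1$ if $m=m'=m_L$ and $0$ otherwise. $\sigma_L=(\mu^*,\xi_L)$, $\sigma_R=(\mu^*,\xi_R)$. *)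

theory Defs
  imports "HOL-Analysis.Analysis"
begin

text \<open>A strategy is a pair (mu, xi): mu u m is the probability that type u sends
message m; xi m m' is the threshold (play L iff type \<le> xi m m').\<close>

type_synonym 'm strat = "(real \<Rightarrow> 'm \<Rightarrow> real) \<times> ('m \<Rightarrow> 'm \<Rightarrow> real)"

definition is_strategy :: "('m::finite) strat \<Rightarrow> bool" where
  "is_strategy \<sigma> \<longleftrightarrow>
     (\<forall>u\<in>{0..1}. (\<forall>m. fst \<sigma> u m \<ge> 0) \<and> (\<Sum>m\<in>UNIV. fst \<sigma> u m) = 1) \<and>
     (\<forall>m. set_borel_measurable lborel {0..1} (\<lambda>u. fst \<sigma> u m)) \<and>
     (\<forall>m m'. snd \<sigma> m m' \<in> {0..1})"

definition payoff_uv :: "('m::finite) strat \<Rightarrow> 'm strat \<Rightarrow> real \<Rightarrow> real \<Rightarrow> real" where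
  "payoff_uv \<sigma> \<sigma>' u v =
     (\<Sum>m\<in>UNIV. \<Sum>m'\<in>UNIV. fst \<sigma> u m * fst \<sigma>' v m' *
        ((1 - u) * of_bool (u \<le> snd \<sigma> m m') * of_bool (v \<le> snd \<sigma>' m' m)
         + u * of_bool (u > snd \<sigma> m m') * of_bool (v > snd \<sigma>' m' m)))"

definition payoff_u :: "(real \<Rightarrow> real) \<Rightarrow> ('m::finite) strat \<Rightarrow> 'm strat \<Rightarrow> real \<Rightarrow> real" where
  "payoff_u f \<sigma> \<sigma>' u = (LINT v:{0..1}|lborel. payoff_uv \<sigma> \<sigma>' u v * f v)"

definition payoff :: "(real \<Rightarrow> real) \<Rightarrow> ('m::finite) strat \<Rightarrow> 'm strat \<Rightarrow> real" where
  "payoff f \<sigma> \<sigma>' = (LINT u:{0..1}|lborel. payoff_u f \<sigma> \<sigma>' u * f u)"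

definition equilibrium :: "(real \<Rightarrow> real) \<Rightarrow> ('m::finite) strat \<Rightarrow> bool" where
  "equilibrium f \<sigma> \<longleftrightarrow> is_strategy \<sigma> \<and>
     (\<forall>u\<in>{0..1}. \<forall>\<sigma>'. is_strategy \<sigma>' \<longrightarrow> payoff_u f \<sigma>' \<sigma> u \<le> payoff_u f \<sigma> \<sigma> u)"

definition mubar :: "(real \<Rightarrow> real) \<Rightarrow> (real \<Rightarrow> 'm \<Rightarrow> real) \<Rightarrow> 'm \<Rightarrow> real" where
  "mubar f \<mu> m = (LINT u:{0..1}|lborel. \<mu> u m * f u)"

definition msupp :: "(real \<Rightarrow> real) \<Rightarrow> (real \<Rightarrow> 'm \<Rightarrow> real) \<Rightarrow> 'm set" where
  "msupp f \<mu> = {m. mubar f \<mu> m > 0}"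

definition Fm :: "(real \<Rightarrow> real) \<Rightarrow> (real \<Rightarrow> 'm \<Rightarrow> real) \<Rightarrow> 'm \<Rightarrow> real \<Rightarrow> real" where
  "Fm f \<mu> m x = (LINT u:{0..x}|lborel. f u * \<mu> u m) / mubar f \<mu> m"

definition strat_equiv :: "(real \<Rightarrow> real) \<Rightarrow> ('m::finite) strat \<Rightarrow> 'm strat \<Rightarrow> bool" where
  "strat_equiv f \<sigma> \<tau> \<longleftrightarrow>
     (AE u in density lborel (\<lambda>u. ennreal (f u * indicator {0..1} u)).
        \<forall>m. fst \<sigma> u m = fst \<tau> u m) \<and>
     (\<forall>m\<in>msupp f (fst \<sigma>). \<forall>m'\<in>msupp f (fst \<sigma>).
        Fm f (fst \<sigma>) m (snd \<sigma> m m') = Fm f (fst \<sigma>) m (snd \<tau> m m'))"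

definition neutrally_stable :: "(real \<Rightarrow> real) \<Rightarrow> ('m::finite) strat \<Rightarrow> bool" where
  "neutrally_stable f \<sigma> \<longleftrightarrow> equilibrium f \<sigma> \<and>
     (\<forall>\<tau>. is_strategy \<tau> \<and> \<not> strat_equiv f \<tau> \<sigma> \<and> payoff f \<tau> \<sigma> = payoff f \<sigma> \<sigma>
        \<longrightarrow> payoff f \<sigma> \<tau> \<ge> payoff f \<tau> \<tau>)"

definition evolutionarily_stable :: "(real \<Rightarrow> real) \<Rightarrow> ('m::finite) strat \<Rightarrow> bool" where
  "evolutionarily_stable f \<sigma> \<longleftrightarrow> equilibrium f \<sigma> \<and>
     (\<forall>\<tau>. is_strategy \<tau> \<and> \<not> strat_equiv f \<tau> \<sigma> \<and> payoff f \<tau> \<sigma> = payoff f \<sigma> \<sigma>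
        \<longrightarrow> payoff f \<sigma> \<tau> > payoff f \<tau> \<tau>)"

definition mu_star :: "'m \<Rightarrow> 'm \<Rightarrow> real \<Rightarrow> 'm \<Rightarrow> real" where
  "mu_star mL mR u m = (if m = (if u \<le> 1/2 then mL else mR) then 1 else 0)"

definition xi_L :: "'m \<Rightarrow> 'm \<Rightarrow> 'm \<Rightarrow> real" where
  "xi_L mR m m' = (if m = mR \<and> m' = mR then 0 else 1)"

definition xi_R :: "'m \<Rightarrow> 'm \<Rightarrow> 'm \<Rightarrow> real" where
  "xi_R mL m m' = (if m = mL \<and> m' = mL then 1 else 0)"

definition sigma_L :: "'m \<Rightarrow> 'm \<Rightarrow> 'm strat" where
  "sigma_L mL mR = (mu_star mL mR, xi_L mR)"

definition sigma_R :: "'m \<Rightarrow> 'm \<Rightarrow> 'm strat" where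
  "sigma_R mL mR = (mu_star mL mR, xi_R mL)"

end

theory Submission
  imports Defs
begin

text \<open>
  Against an incumbent \<sigma> whose message reveals on which side of 1/2 the sender's type lies,
  a type u that sends m and then follows the thresholds of a strategy \<tau> earns a value that depends
  only on m and on \<tau>'s thresholds after m. Hence \<sigma> is an equilibrium as soon as all these message
  values are bounded by \<sigma>'s own payoff, and a mutant \<tau> that does as well as \<sigma> against \<sigma> must,
  for almost every type, send only messages attaining the bound. For \<sigma>_L this forces low types to
  coordinate on L whatever they send, and high types to send m_R and coordinate on R exactly with
  the other senders of m_R (symmetrically for \<sigma>_R). Then \<sigma> earns against \<tau> what it earns
  against itself, while \<tau> earns against itself at most that: neutral stability.
  With only two messages these conditions determine \<tau>'s messages almost everywhere and its
  thresholds up to types of zero conditional mass, so every such \<tau> is equivalent to \<sigma> and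
  the stability condition holds vacuously.
\<close>

section \<open>Integration over the type space\<close>

text \<open>Strategies are only constrained on [0,1]; in the restricted measure their weights
  are measurable functions outright.\<close>

abbreviation type_space :: "real measure" where
  "type_space \<equiv> restrict_space lborel {0..1}"

lemma measurable_ident_unit_interval [measurable]:
  "(\<lambda>u. u) \<in> borel_measurable (restrict_space borel {0..1::real})"
  by (rule measurable_restrict_space1) simp

lemma set_integral_type_space:
  fixes g :: "real \<Rightarrow> real"
  shows "(LINT u:{0..1}|lborel. g u) = integral\<^sup>L type_space g"
  by (subst integral_restrict_space) (auto simp: set_lebesgue_integral_def)

lemma set_integrable_type_space:
  fixes g :: "real \<Rightarrow> real"
  shows "set_integrable lborel {0..1} g \<longleftrightarrow> integrable type_space g"
  by (rule set_integrable_eq) simp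

lemma AE_type_space: "(AE u in type_space. P u) \<longleftrightarrow> (AE u in lborel. u \<in> {0..1} \<longrightarrow> P u)"
  by (simp add: AE_restrict_space_iff)

lemma set_integral_indicator_type_space:
  fixes g :: "real \<Rightarrow> real"
  assumes "B \<subseteq> {0..1}"
  shows "(LINT u:B|lborel. g u) = integral\<^sup>L type_space (\<lambda>u. indicator B u * g u)"
  unfolding set_integral_type_space[symmetric] set_lebesgue_integral_def
  using assms by (intro Bochner_Integration.integral_cong) (auto simp: indicator_def)

lemma AE_lborel_exists_between:
  assumes "AE x in lborel. P x" "(l::real) < r"
  shows "\<exists>x. l < x \<and> x < r \<and> P x"
proof (rule ccontr)
  assume "\<not> ?thesis"
  moreover from assms(1) obtain N where "\<forall>x. x \<notin> N \<longrightarrow> P x" "N \<in> null_sets lborel"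
    by (auto elim!: AE_E3)
  ultimately have "{l<..<r} \<subseteq> N" "N \<in> null_sets lborel" by auto
  then have "{l<..<r} \<in> null_sets lborel" by (auto intro: null_sets_subset)
  with assms(2) show False by (simp add: null_sets_def)
qed

lemma convex_comb_le:
  fixes p c :: "'a \<Rightarrow> real"
  assumes "\<And>x. x \<in> A \<Longrightarrow> 0 \<le> p x" "sum p A = 1"
    and "\<And>x. x \<in> A \<Longrightarrow> 0 < p x \<Longrightarrow> c x \<le> K"
  shows "(\<Sum>x\<in>A. p x * c x) \<le> K"
proof -
  have "p x * c x \<le> p x * K" if "x \<in> A" for x
    using assms(1,3)[OF that] by (cases "p x = 0") (auto intro: mult_left_mono)
  then have "(\<Sum>x\<in>A. p x * c x) \<le> (\<Sum>x\<in>A. p x * K)" by (rule sum_mono)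
  also have "\<dots> = K" using assms(2) by (simp add: sum_distrib_right[symmetric])
  finally show ?thesis .
qed

lemma convex_comb_eq:
  fixes p c :: "'a \<Rightarrow> real"
  assumes "sum p A = 1" "\<And>x. x \<in> A \<Longrightarrow> 0 < p x \<Longrightarrow> c x = K"
    and "\<And>x. x \<in> A \<Longrightarrow> 0 \<le> p x"
  shows "(\<Sum>x\<in>A. p x * c x) = K"
proof -
  have "p x * c x = p x * K" if "x \<in> A" for x
    using assms(2,3)[OF that] by (cases "p x = 0") auto
  then have "(\<Sum>x\<in>A. p x * c x) = (\<Sum>x\<in>A. p x * K)" by (rule sum.cong[OF refl])
  also have "\<dots> = K" using assms(1) by (simp add: sum_distrib_right[symmetric])
  finally show ?thesis .
qed

lemma convex_comb_eq_max:
  fixes p c :: "'a \<Rightarrow> real"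
  assumes "finite A" "\<And>y. y \<in> A \<Longrightarrow> 0 \<le> p y" "sum p A = 1"
    and "\<And>y. y \<in> A \<Longrightarrow> c y \<le> K" "(\<Sum>y\<in>A. p y * c y) = K"
    and "x \<in> A" "0 < p x"
  shows "c x = K"
proof -
  have "(\<Sum>y\<in>A. p y * (K - c y)) = (\<Sum>y\<in>A. p y * K) - (\<Sum>y\<in>A. p y * c y)"
    by (simp add: right_diff_distrib sum_subtractf)
  also have "\<dots> = 0" using assms(3,5) by (simp add: sum_distrib_right[symmetric])
  finally have "(\<Sum>y\<in>A. p y * (K - c y)) = 0" .
  moreover have "\<And>y. y \<in> A \<Longrightarrow> 0 \<le> p y * (K - c y)" using assms(2,4) by simp
  ultimately have "\<forall>y\<in>A. p y * (K - c y) = 0" using assms(1) by (simp add: sum_nonneg_eq_0_iff)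
  then have "p x * (K - c x) = 0" using assms(6) by blast
  with assms(4,6,7) show ?thesis by simp
qed

lemma weighted_sum_eq_max:
  fixes a b x y x\<^sub>0 y\<^sub>0 :: real
  assumes "0 < a" "0 < b" "x \<le> x\<^sub>0" "y \<le> y\<^sub>0" "a * x + b * y = a * x\<^sub>0 + b * y\<^sub>0"
  shows "x = x\<^sub>0" "y = y\<^sub>0"
proof -
  have "a * x \<le> a * x\<^sub>0" "b * y \<le> b * y\<^sub>0"
    using assms by (simp_all add: mult_left_mono)
  then have "a * x = a * x\<^sub>0" "b * y = b * y\<^sub>0" using assms(5) by linarith+
  then show "x = x\<^sub>0" "y = y\<^sub>0" using assms(1,2) by simp_all
qed

lemma strategy_weight_nonneg: "is_strategy \<sigma> \<Longrightarrow> u \<in> {0..1} \<Longrightarrow> 0 \<le> fst \<sigma> u m"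
  by (simp add: is_strategy_def)

lemma strategy_weight_sum: "is_strategy \<sigma> \<Longrightarrow> u \<in> {0..1} \<Longrightarrow> (\<Sum>m\<in>UNIV. fst \<sigma> u m) = 1"
  by (simp add: is_strategy_def)

lemma strategy_weight_le_one: "is_strategy \<sigma> \<Longrightarrow> u \<in> {0..1} \<Longrightarrow> fst \<sigma> u m \<le> 1"
  using member_le_sum[of m UNIV "fst \<sigma> u"] by (simp add: strategy_weight_nonneg strategy_weight_sum)

lemma strategy_threshold: "is_strategy \<sigma> \<Longrightarrow> snd \<sigma> m m' \<in> {0..1}"
  by (simp add: is_strategy_def)

lemma strategy_weight_measurable:
  "is_strategy \<sigma> \<Longrightarrow> (\<lambda>u. fst \<sigma> u m) \<in> borel_measurable type_space"
  by (simp add: is_strategy_def set_borel_measurable_def borel_measurable_restrict_space_iff)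

lemma strategy_point_mass:
  assumes "is_strategy \<sigma>" "u \<in> {0..1}" "\<And>m. 0 < fst \<sigma> u m \<Longrightarrow> m = c"
  shows "fst \<sigma> u m = of_bool (m = c)"
proof -
  have zero: "fst \<sigma> u m = 0" if "m \<noteq> c" for m
    using assms(3)[of m] strategy_weight_nonneg[OF assms(1,2), of m] that by (metis le_less)
  then have "(\<Sum>m\<in>UNIV. fst \<sigma> u m) = fst \<sigma> u c"
    by (simp add: sum.remove[of UNIV c] sum.neutral)
  with strategy_weight_sum[OF assms(1,2)] zero show ?thesis by (cases "m = c") auto
qed

definition outcome :: "real \<Rightarrow> real \<Rightarrow> real \<Rightarrow> real \<Rightarrow> real" where
  "outcome u v x y = (1 - u) * of_bool (u \<le> x) * of_bool (v \<le> y) + u * of_bool (x < u) * of_bool (y < v)"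

lemma outcome_bounds: "u \<in> {0..1} \<Longrightarrow> 0 \<le> outcome u v x y \<and> outcome u v x y \<le> max (1 - u) u"
  by (auto simp: outcome_def)

lemma payoff_uv_outcome:
  "payoff_uv \<sigma> \<sigma>' u v =
     (\<Sum>m\<in>UNIV. fst \<sigma> u m * (\<Sum>m'\<in>UNIV. fst \<sigma>' v m' * outcome u v (snd \<sigma> m m') (snd \<sigma>' m' m)))"
  by (simp add: payoff_uv_def outcome_def sum_distrib_left mult.assoc)

lemma payoff_uv_le_if_outcomes_le:
  assumes "is_strategy \<sigma>" "is_strategy \<sigma>'" "u \<in> {0..1}" "v \<in> {0..1}"
    and "\<And>m m'. 0 < fst \<sigma> u m \<Longrightarrow> 0 < fst \<sigma>' v m' \<Longrightarrow> outcome u v (snd \<sigma> m m') (snd \<sigma>' m' m) \<le> K"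
  shows "payoff_uv \<sigma> \<sigma>' u v \<le> K"
  unfolding payoff_uv_outcome using assms
  by (intro convex_comb_le) (auto simp: strategy_weight_nonneg strategy_weight_sum)

lemma payoff_uv_eq_if_outcomes_eq:
  assumes "is_strategy \<sigma>" "is_strategy \<sigma>'" "u \<in> {0..1}" "v \<in> {0..1}"
    and "\<And>m m'. 0 < fst \<sigma> u m \<Longrightarrow> 0 < fst \<sigma>' v m' \<Longrightarrow> outcome u v (snd \<sigma> m m') (snd \<sigma>' m' m) = K"
  shows "payoff_uv \<sigma> \<sigma>' u v = K"
  unfolding payoff_uv_outcome using assms
  by (intro convex_comb_eq) (auto simp: strategy_weight_nonneg strategy_weight_sum)

lemma payoff_uv_bounds:
  assumes "is_strategy \<sigma>" "is_strategy \<sigma>'" "u \<in> {0..1}" "v \<in> {0..1}"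
  shows "0 \<le> payoff_uv \<sigma> \<sigma>' u v" "payoff_uv \<sigma> \<sigma>' u v \<le> 1"
proof -
  show "0 \<le> payoff_uv \<sigma> \<sigma>' u v" unfolding payoff_uv_outcome using assms
    by (intro sum_nonneg mult_nonneg_nonneg) (auto simp: strategy_weight_nonneg outcome_bounds)
  have "outcome u v x y \<le> 1" for x y
    using outcome_bounds[OF assms(3), of v x y] assms(3) by auto
  then show "payoff_uv \<sigma> \<sigma>' u v \<le> 1"
    using assms by (intro payoff_uv_le_if_outcomes_le)
qed

section \<open>Payoffs against a fixed strategy\<close>

text \<open>\<open>opp_L f \<sigma> m m'\<close> is the probability that a \<sigma>-opponent sends m' and then plays L against
  a sender of m (\<open>opp_R\<close> likewise for R); \<open>msg_value f \<tau> \<sigma> u m\<close> is what type u earns against \<sigma>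
  by sending m and then following the thresholds of \<tau>.\<close>

definition opp_L :: "(real \<Rightarrow> real) \<Rightarrow> ('m::finite) strat \<Rightarrow> 'm \<Rightarrow> 'm \<Rightarrow> real" where
  "opp_L f \<sigma> m m' = (LINT v:{0..1}|lborel. fst \<sigma> v m' * of_bool (v \<le> snd \<sigma> m' m) * f v)"

definition opp_R :: "(real \<Rightarrow> real) \<Rightarrow> ('m::finite) strat \<Rightarrow> 'm \<Rightarrow> 'm \<Rightarrow> real" where
  "opp_R f \<sigma> m m' = (LINT v:{0..1}|lborel. fst \<sigma> v m' * of_bool (snd \<sigma> m' m < v) * f v)"

definition msg_value :: "(real \<Rightarrow> real) \<Rightarrow> ('m::finite) strat \<Rightarrow> 'm strat \<Rightarrow> real \<Rightarrow> 'm \<Rightarrow> real" where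
  "msg_value f \<tau> \<sigma> u m =
     (\<Sum>m'\<in>UNIV. (1 - u) * of_bool (u \<le> snd \<tau> m m') * opp_L f \<sigma> m m'
                + u * of_bool (snd \<tau> m m' < u) * opp_R f \<sigma> m m')"

locale type_density =
  fixes f :: "real \<Rightarrow> real"
  assumes density_integrable: "set_integrable lborel {0..1} f"
    and density_pos: "\<And>u. u \<in> {0..1} \<Longrightarrow> 0 < f u"
    and density_total: "(LINT u:{0..1}|lborel. f u) = 1"
begin

lemma integrable_density: "integrable type_space f"
  using density_integrable by (simp add: set_integrable_type_space)

lemma density_measurable [measurable]: "f \<in> borel_measurable type_space"
  using integrable_density by (rule borel_measurable_integrable)

lemma integrable_weighted:
  assumes "g \<in> borel_measurable type_space" "\<And>u. u \<in> {0..1} \<Longrightarrow> \<bar>g u\<bar> \<le> 1"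
  shows "integrable type_space (\<lambda>u. g u * f u)"
proof (rule Bochner_Integration.integrable_bound[OF integrable_density])
  show "(\<lambda>u. g u * f u) \<in> borel_measurable type_space" using assms(1) by measurable
  show "AE u in type_space. norm (g u * f u) \<le> norm (f u)"
    using assms(2) density_pos
    by (intro AE_I2) (auto simp: abs_mult less_imp_le intro: mult_left_le_one_le)
qed

lemma payoff_u_msg_value:
  assumes "is_strategy \<sigma>"
  shows "payoff_u f \<tau> \<sigma> u = (\<Sum>m\<in>UNIV. fst \<tau> u m * msg_value f \<tau> \<sigma> u m)"
proof -
  have [measurable]: "(\<lambda>v. fst \<sigma> v m) \<in> borel_measurable type_space" for m
    using assms by (rule strategy_weight_measurable)
  have bounded: "\<bar>fst \<sigma> v m' * of_bool b\<bar> \<le> 1" if "v \<in> {0..1}" for v m' b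
    using strategy_weight_nonneg[OF assms that] strategy_weight_le_one[OF assms that] by simp
  have integrable: "integrable type_space (\<lambda>v. fst \<sigma> v m' * of_bool (v \<le> x) * f v)"
      "integrable type_space (\<lambda>v. fst \<sigma> v m' * of_bool (x < v) * f v)" for m' x
    by (rule integrable_weighted, measurable, rule bounded, assumption)+
  have "payoff_u f \<tau> \<sigma> u = integral\<^sup>L type_space (\<lambda>v. \<Sum>m\<in>UNIV. \<Sum>m'\<in>UNIV.
      (fst \<tau> u m * (1 - u) * of_bool (u \<le> snd \<tau> m m')) * (fst \<sigma> v m' * of_bool (v \<le> snd \<sigma> m' m) * f v)
    + (fst \<tau> u m * u * of_bool (snd \<tau> m m' < u)) * (fst \<sigma> v m' * of_bool (snd \<sigma> m' m < v) * f v))"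
    unfolding payoff_u_def set_integral_type_space payoff_uv_def
    by (intro Bochner_Integration.integral_cong refl) (simp add: sum_distrib_left sum_distrib_right algebra_simps)
  also have "\<dots> = (\<Sum>m\<in>UNIV. \<Sum>m'\<in>UNIV.
      (fst \<tau> u m * (1 - u) * of_bool (u \<le> snd \<tau> m m')) * opp_L f \<sigma> m m'
    + (fst \<tau> u m * u * of_bool (snd \<tau> m m' < u)) * opp_R f \<sigma> m m')"
    by (simp add: integrable opp_L_def opp_R_def set_integral_type_space)
  also have "\<dots> = (\<Sum>m\<in>UNIV. fst \<tau> u m * msg_value f \<tau> \<sigma> u m)"
    by (simp add: msg_value_def sum_distrib_left algebra_simps)
  finally show ?thesis .
qed

lemma payoff_uv_measurable:
  assumes "is_strategy \<sigma>'"
  shows "(\<lambda>v. payoff_uv \<sigma> \<sigma>' u v) \<in> borel_measurable type_space"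
proof -
  have [measurable]: "(\<lambda>v. fst \<sigma>' v m) \<in> borel_measurable type_space" for m
    using assms by (rule strategy_weight_measurable)
  show ?thesis unfolding payoff_uv_def by measurable
qed

lemma integrable_payoff_uv:
  assumes "is_strategy \<sigma>" "is_strategy \<sigma>'" "u \<in> {0..1}"
  shows "integrable type_space (\<lambda>v. payoff_uv \<sigma> \<sigma>' u v * f v)"
  using assms payoff_uv_bounds[OF assms]
  by (intro integrable_weighted payoff_uv_measurable) auto

lemma payoff_u_bounds:
  assumes "is_strategy \<sigma>" "is_strategy \<sigma>'" "u \<in> {0..1}"
  shows "0 \<le> payoff_u f \<sigma> \<sigma>' u" "payoff_u f \<sigma> \<sigma>' u \<le> 1"
proof -
  have pointwise: "0 \<le> payoff_uv \<sigma> \<sigma>' u v * f v \<and> payoff_uv \<sigma> \<sigma>' u v * f v \<le> f v"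
    if "v \<in> {0..1}" for v
    using payoff_uv_bounds[OF assms that] density_pos[OF that]
    by (auto intro: mult_left_le_one_le)
  have "payoff_u f \<sigma> \<sigma>' u = integral\<^sup>L type_space (\<lambda>v. payoff_uv \<sigma> \<sigma>' u v * f v)"
    by (simp add: payoff_u_def set_integral_type_space)
  moreover have "0 \<le> integral\<^sup>L type_space (\<lambda>v. payoff_uv \<sigma> \<sigma>' u v * f v)"
    using pointwise by (intro integral_nonneg_AE AE_I2) simp
  moreover have "integral\<^sup>L type_space (\<lambda>v. payoff_uv \<sigma> \<sigma>' u v * f v) \<le> integral\<^sup>L type_space f"
    using pointwise
    by (intro integral_mono_AE integrable_payoff_uv[OF assms] integrable_density AE_I2) simp
  moreover have "integral\<^sup>L type_space f = 1"
    using density_total by (simp add: set_integral_type_space)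
  ultimately show "0 \<le> payoff_u f \<sigma> \<sigma>' u" "payoff_u f \<sigma> \<sigma>' u \<le> 1" by auto
qed

lemma payoff_u_measurable:
  assumes "is_strategy \<tau>" "is_strategy \<sigma>"
  shows "(\<lambda>u. payoff_u f \<tau> \<sigma> u) \<in> borel_measurable type_space"
proof -
  have [measurable]: "(\<lambda>u. fst \<tau> u m) \<in> borel_measurable type_space" for m
    using assms(1) by (rule strategy_weight_measurable)
  show ?thesis unfolding payoff_u_msg_value[OF assms(2)] msg_value_def by measurable
qed

lemma integrable_payoff_u:
  assumes "is_strategy \<tau>" "is_strategy \<sigma>"
  shows "integrable type_space (\<lambda>u. payoff_u f \<tau> \<sigma> u * f u)"
  using payoff_u_bounds[OF assms]
  by (intro integrable_weighted payoff_u_measurable assms) auto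

lemma payoff_u_mono_AE:
  assumes "is_strategy \<sigma>\<^sub>1" "is_strategy \<sigma>\<^sub>1'" "is_strategy \<sigma>\<^sub>2" "is_strategy \<sigma>\<^sub>2'" "u \<in> {0..1}"
    and "AE v in type_space. payoff_uv \<sigma>\<^sub>1 \<sigma>\<^sub>1' u v \<le> payoff_uv \<sigma>\<^sub>2 \<sigma>\<^sub>2' u v"
  shows "payoff_u f \<sigma>\<^sub>1 \<sigma>\<^sub>1' u \<le> payoff_u f \<sigma>\<^sub>2 \<sigma>\<^sub>2' u"
  unfolding payoff_u_def set_integral_type_space
proof (rule integral_mono_AE)
  show "AE v in type_space. payoff_uv \<sigma>\<^sub>1 \<sigma>\<^sub>1' u v * f v \<le> payoff_uv \<sigma>\<^sub>2 \<sigma>\<^sub>2' u v * f v"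
    using assms(6) AE_space[of type_space]
    by eventually_elim (auto intro!: mult_right_mono simp: less_imp_le density_pos)
qed (fact integrable_payoff_uv[OF assms(1,2,5)] integrable_payoff_uv[OF assms(3,4,5)])+

lemma payoff_mono_AE:
  assumes "is_strategy \<sigma>\<^sub>1" "is_strategy \<sigma>\<^sub>1'" "is_strategy \<sigma>\<^sub>2" "is_strategy \<sigma>\<^sub>2'"
    and "AE u in type_space. payoff_u f \<sigma>\<^sub>1 \<sigma>\<^sub>1' u \<le> payoff_u f \<sigma>\<^sub>2 \<sigma>\<^sub>2' u"
  shows "payoff f \<sigma>\<^sub>1 \<sigma>\<^sub>1' \<le> payoff f \<sigma>\<^sub>2 \<sigma>\<^sub>2'"
  unfolding payoff_def set_integral_type_space
proof (rule integral_mono_AE)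
  show "AE u in type_space. payoff_u f \<sigma>\<^sub>1 \<sigma>\<^sub>1' u * f u \<le> payoff_u f \<sigma>\<^sub>2 \<sigma>\<^sub>2' u * f u"
    using assms(5) AE_space[of type_space]
    by eventually_elim (auto intro!: mult_right_mono simp: less_imp_le density_pos)
qed (fact integrable_payoff_u[OF assms(1,2)] integrable_payoff_u[OF assms(3,4)])+

lemma equilibriumI:
  fixes \<sigma> :: "('m::finite) strat"
  assumes "is_strategy \<sigma>"
    and "\<And>\<tau> u m. is_strategy \<tau> \<Longrightarrow> u \<in> {0..1} \<Longrightarrow> msg_value f \<tau> \<sigma> u m \<le> payoff_u f \<sigma> \<sigma> u"
  shows "equilibrium f \<sigma>"
  unfolding equilibrium_def
proof (intro conjI ballI allI impI assms(1))
  fix u :: real and \<tau> :: "'m strat" assume u: "u \<in> {0..1}" and \<tau>: "is_strategy \<tau>"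
  show "payoff_u f \<tau> \<sigma> u \<le> payoff_u f \<sigma> \<sigma> u"
    unfolding payoff_u_msg_value[OF assms(1), of \<tau>] using assms(2)[OF \<tau> u]
    by (intro convex_comb_le) (auto simp: strategy_weight_nonneg[OF \<tau> u] strategy_weight_sum[OF \<tau> u])
qed

lemma msg_value_eq_of_best_reply:
  assumes "is_strategy \<tau>" "is_strategy \<sigma>" "u \<in> {0..1}"
    and "\<And>m. msg_value f \<tau> \<sigma> u m \<le> payoff_u f \<sigma> \<sigma> u"
    and "payoff_u f \<tau> \<sigma> u = payoff_u f \<sigma> \<sigma> u" "0 < fst \<tau> u m"
  shows "msg_value f \<tau> \<sigma> u m = payoff_u f \<sigma> \<sigma> u"
proof -
  have "(\<Sum>m\<in>UNIV. fst \<tau> u m * msg_value f \<tau> \<sigma> u m) = payoff_u f \<sigma> \<sigma> u"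
    using assms(5) by (simp add: payoff_u_msg_value[OF assms(2)])
  then show ?thesis
    using assms(4,6) strategy_weight_nonneg[OF assms(1,3)] strategy_weight_sum[OF assms(1,3)]
    by (intro convex_comb_eq_max[of UNIV "fst \<tau> u" "msg_value f \<tau> \<sigma> u"]) auto
qed

lemma equilibrium_payoff_u_le:
  "equilibrium f \<sigma> \<Longrightarrow> is_strategy \<tau> \<Longrightarrow> u \<in> {0..1} \<Longrightarrow> payoff_u f \<tau> \<sigma> u \<le> payoff_u f \<sigma> \<sigma> u"
  unfolding equilibrium_def by blast

lemma best_reply_AE:
  assumes "equilibrium f \<sigma>" "is_strategy \<tau>" "payoff f \<tau> \<sigma> = payoff f \<sigma> \<sigma>"
  shows "AE u in type_space. payoff_u f \<tau> \<sigma> u = payoff_u f \<sigma> \<sigma> u"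
proof -
  have \<sigma>: "is_strategy \<sigma>" using assms(1) by (simp add: equilibrium_def)
  define loss where "loss = (\<lambda>u. payoff_u f \<sigma> \<sigma> u * f u - payoff_u f \<tau> \<sigma> u * f u)"
  have integrable: "integrable type_space loss"
    unfolding loss_def by (intro Bochner_Integration.integrable_diff integrable_payoff_u assms(2) \<sigma>)
  have "integral\<^sup>L type_space loss = 0"
    using assms(3) integrable_payoff_u[OF \<sigma> \<sigma>] integrable_payoff_u[OF assms(2) \<sigma>]
    by (simp add: loss_def payoff_def set_integral_type_space Bochner_Integration.integral_diff)
  moreover have nonneg: "AE u in type_space. 0 \<le> loss u"
    using equilibrium_payoff_u_le[OF assms(1,2)] density_pos
    by (intro AE_I2) (auto simp: loss_def less_imp_le intro!: mult_right_mono)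
  ultimately have "AE u in type_space. loss u = 0"
    using integral_nonneg_eq_0_iff_AE[OF integrable nonneg] by simp
  then show ?thesis
    using AE_space[of type_space] by eventually_elim (use density_pos in \<open>fastforce simp: loss_def\<close>)
qed

lemma neutrally_stableI:
  fixes \<sigma> :: "('m::finite) strat"
  assumes eq: "equilibrium f \<sigma>"
    and good: "\<And>\<tau>. is_strategy \<tau> \<Longrightarrow> AE u in type_space. payoff_u f \<tau> \<sigma> u = payoff_u f \<sigma> \<sigma> u \<Longrightarrow>
        AE u in type_space. good \<tau> u"
    and against_good: "\<And>\<tau> u v. is_strategy \<tau> \<Longrightarrow> u \<in> {0..1} \<Longrightarrow> v \<in> {0..1} \<Longrightarrow> good \<tau> v \<Longrightarrow>
        payoff_uv \<sigma> \<tau> u v = payoff_uv \<sigma> \<sigma> u v"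
    and good_self: "\<And>\<tau> u v. is_strategy \<tau> \<Longrightarrow> u \<in> {0..1} \<Longrightarrow> v \<in> {0..1} \<Longrightarrow>
        good \<tau> u \<Longrightarrow> good \<tau> v \<Longrightarrow> payoff_uv \<tau> \<tau> u v \<le> payoff_uv \<sigma> \<sigma> u v"
  shows "neutrally_stable f \<sigma>"
  unfolding neutrally_stable_def
proof (intro conjI allI impI eq, elim conjE)
  fix \<tau> :: "'m strat" assume \<tau>: "is_strategy \<tau>" and "payoff f \<tau> \<sigma> = payoff f \<sigma> \<sigma>"
  have \<sigma>: "is_strategy \<sigma>" using eq by (simp add: equilibrium_def)
  have ae_good: "AE v in type_space. v \<in> {0..1} \<and> good \<tau> v"
    using good[OF \<tau> best_reply_AE[OF eq \<tau> \<open>payoff f \<tau> \<sigma> = _\<close>]] AE_space[of type_space]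
    by eventually_elim simp
  have against: "payoff_u f \<sigma> \<tau> u = payoff_u f \<sigma> \<sigma> u" if u: "u \<in> {0..1}" for u
  proof -
    have "AE v in type_space. payoff_uv \<sigma> \<tau> u v = payoff_uv \<sigma> \<sigma> u v"
      using ae_good by eventually_elim (simp add: against_good[OF \<tau> u])
    then have "AE v in type_space. payoff_uv \<sigma> \<tau> u v \<le> payoff_uv \<sigma> \<sigma> u v"
      "AE v in type_space. payoff_uv \<sigma> \<sigma> u v \<le> payoff_uv \<sigma> \<tau> u v"
      by (auto elim: AE_mp intro: AE_I2)
    then show ?thesis
      by (intro antisym payoff_u_mono_AE[OF \<sigma> \<tau> \<sigma> \<sigma> u] payoff_u_mono_AE[OF \<sigma> \<sigma> \<sigma> \<tau> u])
  qed
  have "payoff f \<tau> \<tau> \<le> payoff f \<sigma> \<sigma>"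
  proof (rule payoff_mono_AE[OF \<tau> \<tau> \<sigma> \<sigma>])
    show "AE u in type_space. payoff_u f \<tau> \<tau> u \<le> payoff_u f \<sigma> \<sigma> u"
      using ae_good
    proof eventually_elim
      case (elim u)
      have "AE v in type_space. payoff_uv \<tau> \<tau> u v \<le> payoff_uv \<sigma> \<sigma> u v"
        using ae_good by eventually_elim (use elim in \<open>simp add: good_self[OF \<tau>]\<close>)
      then show ?case using elim by (intro payoff_u_mono_AE[OF \<tau> \<tau> \<sigma> \<sigma>]) simp_all
    qed
  qed
  also have "\<dots> = payoff f \<sigma> \<tau>"
    using against by (intro antisym payoff_mono_AE[OF \<sigma> \<sigma> \<sigma> \<tau>] payoff_mono_AE[OF \<sigma> \<tau> \<sigma> \<sigma>] AE_I2) simp_all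
  finally show "payoff f \<tau> \<tau> \<le> payoff f \<sigma> \<tau>" .
qed

lemma integral_density_pos:
  assumes "0 \<le> l" "l < r" "r \<le> 1" "{l<..<r} \<subseteq> B" "B \<subseteq> {0..1}" "B \<in> sets lborel"
  shows "0 < (LINT u:B|lborel. f u)"
proof -
  have integrable: "integrable type_space (\<lambda>u. indicator B u * f u)"
    using assms(6) by (intro integrable_weighted) (auto simp: indicator_def)
  have nonneg: "AE u in type_space. 0 \<le> indicator B u * f u"
    using density_pos by (intro AE_I2) (simp add: less_imp_le)
  have "integral\<^sup>L type_space (\<lambda>u. indicator B u * f u) \<noteq> 0"
  proof
    assume "integral\<^sup>L type_space (\<lambda>u. indicator B u * f u) = 0"
    then have "AE u in lborel. u \<in> {0..1} \<longrightarrow> indicator B u * f u = 0"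
      using integral_nonneg_eq_0_iff_AE[OF integrable nonneg] by (simp add: AE_type_space)
    then obtain u where "l < u" "u < r" "u \<in> {0..1} \<longrightarrow> indicator B u * f u = 0"
      using AE_lborel_exists_between assms(2) by blast
    with assms(1,3,4) density_pos[of u] show False by auto
  qed
  with integral_nonneg_AE[OF nonneg] assms(5) show ?thesis
    by (simp add: set_integral_indicator_type_space)
qed

lemma opp_threshold_one:
  assumes "snd \<sigma> m' m = 1"
  shows "opp_L f \<sigma> m m' = mubar f (fst \<sigma>) m'" "opp_R f \<sigma> m m' = 0"
proof -
  show "opp_L f \<sigma> m m' = mubar f (fst \<sigma>) m'"
    unfolding opp_L_def mubar_def assms by (rule set_lebesgue_integral_cong) auto
  show "opp_R f \<sigma> m m' = 0"
    unfolding opp_R_def assms set_lebesgue_integral_def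
    by (intro integral_eq_zero_AE AE_I2) (simp add: indicator_def)
qed

lemma opp_threshold_zero:
  assumes "is_strategy \<sigma>" "snd \<sigma> m' m = 0"
  shows "opp_L f \<sigma> m m' = 0" "opp_R f \<sigma> m m' = mubar f (fst \<sigma>) m'"
proof -
  have [measurable]: "(\<lambda>v. fst \<sigma> v m') \<in> borel_measurable type_space"
    using assms(1) by (rule strategy_weight_measurable)
  have nonzero: "AE v in type_space. v \<noteq> 0"
    unfolding AE_type_space using AE_lborel_singleton[where c = "0::real"] by eventually_elim simp
  show "opp_L f \<sigma> m m' = 0"
    unfolding opp_L_def set_integral_type_space assms(2)
    using nonzero by (intro integral_eq_zero_AE) (auto elim: AE_mp intro: AE_I2)
  show "opp_R f \<sigma> m m' = mubar f (fst \<sigma>) m'"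
    unfolding opp_R_def mubar_def set_integral_type_space assms(2)
    using nonzero by (intro integral_cong_AE) (auto elim: AE_mp intro: AE_I2)
qed

lemma AE_type_distribution:
  assumes "AE u in type_space. P u"
  shows "AE u in density lborel (\<lambda>u. ennreal (f u * indicator {0..1} u)). P u"
proof -
  have "(\<lambda>u. indicator {0..1} u *\<^sub>R f u) \<in> borel_measurable lborel"
    using density_integrable unfolding set_integrable_def by (rule borel_measurable_integrable)
  then have "(\<lambda>u. ennreal (f u * indicator {0..1} u)) \<in> borel_measurable lborel"
    by (simp add: mult.commute)
  moreover have "AE u in lborel. 0 < ennreal (f u * indicator {0..1} u) \<longrightarrow> P u"
    using assms unfolding AE_type_space by eventually_elim (auto simp: indicator_def)
  ultimately show ?thesis by (simp add: AE_density)
qed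

lemma Fm_eq_if_no_weight_between:
  assumes "is_strategy \<tau>" "x \<le> y" "y \<le> 1"
    and "AE u in lborel. x < u \<and> u \<le> y \<longrightarrow> fst \<tau> u m = 0"
  shows "Fm f (fst \<tau>) m x = Fm f (fst \<tau>) m y"
proof -
  have [measurable]: "(\<lambda>u. fst \<tau> u m) \<in> borel_measurable type_space"
    using assms(1) by (rule strategy_weight_measurable)
  have initial_segment: "(LINT u:{0..z}|lborel. f u * fst \<tau> u m) =
      integral\<^sup>L type_space (\<lambda>u. of_bool (u \<le> z) * (f u * fst \<tau> u m))" if "z \<le> 1" for z
    using that by (subst set_integral_indicator_type_space)
      (auto intro!: Bochner_Integration.integral_cong simp: indicator_def)
  have "AE u in type_space. of_bool (u \<le> x) * (f u * fst \<tau> u m) = of_bool (u \<le> y) * (f u * fst \<tau> u m)"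
    unfolding AE_type_space using assms(4) by eventually_elim (use assms(2) in auto)
  then have "(LINT u:{0..x}|lborel. f u * fst \<tau> u m) = (LINT u:{0..y}|lborel. f u * fst \<tau> u m)"
    unfolding initial_segment[OF order_trans[OF assms(2,3)]] initial_segment[OF assms(3)]
    by (intro integral_cong_AE) simp_all
  then show ?thesis by (simp add: Fm_def)
qed

end

section \<open>The two-message incumbents\<close>

locale signalling_game = type_density f for f :: "real \<Rightarrow> real" +
  fixes mL mR :: "'m::finite"
  assumes distinct_messages: "mL \<noteq> mR"
begin

definition low_mass :: real where
  "low_mass = (LINT u:{0..1/2}|lborel. f u)"

definition high_mass :: real where
  "high_mass = (LINT u:{1/2<..1}|lborel. f u)"

lemma low_mass_pos: "0 < low_mass"
  unfolding low_mass_def by (rule integral_density_pos[of 0 "1/2"]) auto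

lemma high_mass_pos: "0 < high_mass"
  unfolding high_mass_def by (rule integral_density_pos[of "1/2" 1]) auto

lemma high_mass_eq: "high_mass = 1 - low_mass"
proof -
  have "(LINT u:{0..1/2} \<union> {1/2<..1}|lborel. f u) = low_mass + high_mass"
    unfolding low_mass_def high_mass_def
    by (rule set_integral_Un) (auto intro!: set_integrable_subset[OF density_integrable])
  moreover have "{0..1/2} \<union> {1/2<..1} = {0..(1::real)}" by auto
  ultimately show ?thesis using density_total by simp
qed

lemma sum_over_messages:
  assumes "\<And>m. m \<noteq> mL \<Longrightarrow> m \<noteq> mR \<Longrightarrow> g m = 0"
  shows "(\<Sum>m\<in>UNIV. g m) = g mL + g mR"
proof -
  have "(\<Sum>m\<in>UNIV. g m) = (\<Sum>m\<in>{mL, mR}. g m)"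
    using assms by (intro sum.mono_neutral_right) auto
  then show ?thesis using distinct_messages by simp
qed

lemma mu_star_eq: "mu_star mL mR u m = of_bool (m = (if u \<le> 1/2 then mL else mR))"
  by (simp add: mu_star_def)

lemma mubar_mu_star:
  "mubar f (mu_star mL mR) m = (if m = mL then low_mass else if m = mR then high_mass else 0)"
proof -
  have "mubar f (mu_star mL mR) m = integral\<^sup>L type_space
      (\<lambda>u. (if m = mL then indicator {0..1/2} u else if m = mR then indicator {1/2<..1} u else 0) * f u)"
    unfolding mubar_def set_integral_type_space using distinct_messages
    by (intro Bochner_Integration.integral_cong) (auto simp: mu_star_def indicator_def)
  moreover have "low_mass = integral\<^sup>L type_space (\<lambda>u. indicator {0..1/2} u * f u)"
    unfolding low_mass_def by (rule set_integral_indicator_type_space) auto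
  moreover have "high_mass = integral\<^sup>L type_space (\<lambda>u. indicator {1/2<..1} u * f u)"
    unfolding high_mass_def by (rule set_integral_indicator_type_space) auto
  ultimately show ?thesis by simp
qed

lemma is_strategy_mu_star:
  assumes "\<And>m m'. \<xi> m m' \<in> {0..1}"
  shows "is_strategy (mu_star mL mR, \<xi>)"
proof -
  have "(\<lambda>u. mu_star mL mR u m) \<in> borel_measurable lborel" for m
    unfolding mu_star_eq by measurable
  then have "set_borel_measurable lborel {0..1} (\<lambda>u. mu_star mL mR u m)" for m
    unfolding set_borel_measurable_def by measurable
  moreover have "(\<Sum>m\<in>UNIV. mu_star mL mR u m) = 1" for u
    by (simp add: mu_star_eq)
  ultimately show ?thesis
    using assms by (simp add: is_strategy_def mu_star_eq)
qed

lemma mu_star_pos: "0 < mu_star mL mR u m \<Longrightarrow> m = (if u \<le> 1/2 then mL else mR)"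
  by (simp add: mu_star_eq)

subsection \<open>The strategy \<sigma>_L\<close>

abbreviation "sL \<equiv> sigma_L mL mR"

lemma snd_sigma_L: "snd sL m m' = xi_L mR m m'"
  by (simp add: sigma_L_def)

lemma strategy_sigma_L: "is_strategy sL"
  unfolding sigma_L_def by (rule is_strategy_mu_star) (simp add: xi_L_def)

lemma opp_sigma_L:
  "opp_L f sL m m' = (if m' = mL then low_mass else if m' = mR \<and> m \<noteq> mR then high_mass else 0)"
  "opp_R f sL m m' = (if m' = mR \<and> m = mR then high_mass else 0)"
  using opp_threshold_zero[OF strategy_sigma_L, of m' m] opp_threshold_one[of sL m' m] distinct_messages
  by (cases "m' = mR"; auto simp: sigma_L_def xi_L_def mubar_mu_star)+

lemma msg_value_sigma_L:
  "msg_value f \<tau> sL u m = low_mass * ((1 - u) * of_bool (u \<le> snd \<tau> m mL)) +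
     high_mass * (if m = mR then u * of_bool (snd \<tau> mR mR < u) else (1 - u) * of_bool (u \<le> snd \<tau> m mR))"
  unfolding msg_value_def opp_sigma_L using distinct_messages
  by (subst sum_over_messages) auto

lemma payoff_u_mu_star:
  assumes "is_strategy \<sigma>" "fst \<tau> = mu_star mL mR" "u \<in> {0..1}"
  shows "payoff_u f \<tau> \<sigma> u = msg_value f \<tau> \<sigma> u (if u \<le> 1/2 then mL else mR)"
  unfolding payoff_u_msg_value[OF assms(1)] assms(2) by (simp add: mu_star_eq)

lemma payoff_u_sigma_L_self:
  assumes "u \<in> {0..1}"
  shows "payoff_u f sL sL u = (if u \<le> 1/2 then 1 - u else low_mass * (1 - u) + high_mass * u)"
proof -
  have "payoff_u f sL sL u = msg_value f sL sL u (if u \<le> 1/2 then mL else mR)"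
    by (rule payoff_u_mu_star[OF strategy_sigma_L _ assms]) (simp add: sigma_L_def)
  also have "\<dots> = (if u \<le> 1/2 then 1 - u else low_mass * (1 - u) + high_mass * u)"
    unfolding msg_value_sigma_L snd_sigma_L xi_L_def
    using assms distinct_messages by (auto simp: high_mass_eq algebra_simps)
  finally show ?thesis .
qed

lemma msg_value_sigma_L_le:
  assumes "u \<in> {0..1}"
  shows "msg_value f \<tau> sL u m \<le> payoff_u f sL sL u"
proof -
  have "(1 - u) * of_bool (u \<le> snd \<tau> m mL) \<le> 1 - u"
    "(if m = mR then u * of_bool (snd \<tau> mR mR < u) else (1 - u) * of_bool (u \<le> snd \<tau> m mR))
       \<le> (if u \<le> 1/2 then 1 - u else u)"
    using assms by auto
  then have "msg_value f \<tau> sL u m \<le> low_mass * (1 - u) + high_mass * (if u \<le> 1/2 then 1 - u else u)"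
    unfolding msg_value_sigma_L using low_mass_pos high_mass_pos
    by (intro add_mono mult_left_mono) auto
  also have "\<dots> = payoff_u f sL sL u"
    by (simp add: payoff_u_sigma_L_self[OF assms] high_mass_eq algebra_simps)
  finally show ?thesis .
qed

lemma equilibrium_sigma_L: "equilibrium f sL"
  by (intro equilibriumI strategy_sigma_L msg_value_sigma_L_le)

text \<open>The types 1/2 and 1 are excluded: there the best-reply conditions on the thresholds are not forced.\<close>
definition best_reply_L :: "'m strat \<Rightarrow> real \<Rightarrow> bool" where
  "best_reply_L \<tau> u \<longleftrightarrow> u \<noteq> 1/2 \<and> u \<noteq> 1 \<and>
     (\<forall>m. 0 < fst \<tau> u m \<longrightarrow>
        (if u < 1/2 then m \<noteq> mR \<and> u \<le> snd \<tau> m mL \<and> u \<le> snd \<tau> m mR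
         else m = mR \<and> u \<le> snd \<tau> mR mL \<and> snd \<tau> mR mR < u))"

lemma best_reply_L_support:
  assumes "best_reply_L \<tau> u" "0 < fst \<tau> u m"
  shows "if u < 1/2 then m \<noteq> mR \<and> u \<le> snd \<tau> m mL \<and> u \<le> snd \<tau> m mR
         else m = mR \<and> u \<le> snd \<tau> mR mL \<and> snd \<tau> mR mR < u"
  using assms unfolding best_reply_L_def by blast

lemma best_reply_L_message:
  assumes "u \<in> {0..1}" "u \<noteq> 1/2" "u \<noteq> 1" "msg_value f \<tau> sL u m = payoff_u f sL sL u"
  shows "if u < 1/2 then m \<noteq> mR \<and> u \<le> snd \<tau> m mL \<and> u \<le> snd \<tau> m mR
         else m = mR \<and> u \<le> snd \<tau> mR mL \<and> snd \<tau> mR mR < u"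
proof -
  define A where "A = (1 - u) * of_bool (u \<le> snd \<tau> m mL)"
  define B where "B = (if m = mR then u * of_bool (snd \<tau> mR mR < u) else (1 - u) * of_bool (u \<le> snd \<tau> m mR))"
  define B\<^sub>0 where "B\<^sub>0 = (if u \<le> 1/2 then 1 - u else u)"
  have "A \<le> 1 - u" "B \<le> B\<^sub>0" using assms(1) by (auto simp: A_def B_def B\<^sub>0_def)
  moreover have "low_mass * A + high_mass * B = low_mass * (1 - u) + high_mass * B\<^sub>0"
    using assms(4) unfolding msg_value_sigma_L payoff_u_sigma_L_self[OF assms(1)] A_def B_def B\<^sub>0_def
    by (simp add: high_mass_eq algebra_simps)
  ultimately have "A = 1 - u" "B = B\<^sub>0"
    using weighted_sum_eq_max[OF low_mass_pos high_mass_pos] by blast+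
  then show ?thesis
    using assms(1-3) by (auto simp: A_def B_def B\<^sub>0_def of_bool_def split: if_splits)
qed

lemma AE_best_reply_L:
  assumes "is_strategy \<tau>" "AE u in type_space. payoff_u f \<tau> sL u = payoff_u f sL sL u"
  shows "AE u in type_space. best_reply_L \<tau> u"
  using assms(2) AE_lborel_singleton[where c = "1/2::real"] AE_lborel_singleton[where c = "1::real"]
  unfolding AE_type_space
proof eventually_elim
  case (elim u)
  show ?case
  proof
    assume u: "u \<in> {0..1}"
    show "best_reply_L \<tau> u"
      unfolding best_reply_L_def
    proof (intro conjI allI impI)
      fix m assume "0 < fst \<tau> u m"
      with elim u show "if u < 1/2 then m \<noteq> mR \<and> u \<le> snd \<tau> m mL \<and> u \<le> snd \<tau> m mR
          else m = mR \<and> u \<le> snd \<tau> mR mL \<and> snd \<tau> mR mR < u"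
        by (intro best_reply_L_message msg_value_eq_of_best_reply[OF assms(1) strategy_sigma_L]
            msg_value_sigma_L_le) auto
    qed (use elim in auto)
  qed
qed

lemma payoff_uv_sigma_L_self:
  assumes "u \<in> {0..1}" "v \<in> {0..1}"
  shows "payoff_uv sL sL u v = (if 1/2 < u \<and> 1/2 < v then u else 1 - u)"
  using assms distinct_messages
  by (intro payoff_uv_eq_if_outcomes_eq[OF strategy_sigma_L strategy_sigma_L])
    (auto simp: sigma_L_def mu_star_eq xi_L_def outcome_def)

lemma payoff_uv_sigma_L_best_reply:
  assumes "is_strategy \<tau>" "u \<in> {0..1}" "v \<in> {0..1}" "best_reply_L \<tau> v"
  shows "payoff_uv sL \<tau> u v = (if 1/2 < u \<and> 1/2 < v then u else 1 - u)"
proof (rule payoff_uv_eq_if_outcomes_eq[OF strategy_sigma_L assms(1-3)])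
  fix m m' assume pos: "0 < fst sL u m" "0 < fst \<tau> v m'"
  have m: "m = (if u \<le> 1/2 then mL else mR)"
    using pos(1) by (intro mu_star_pos) (simp add: sigma_L_def)
  have m': "if v < 1/2 then m' \<noteq> mR \<and> v \<le> snd \<tau> m' mL \<and> v \<le> snd \<tau> m' mR
      else m' = mR \<and> v \<le> snd \<tau> mR mL \<and> snd \<tau> mR mR < v"
    by (rule best_reply_L_support[OF assms(4) pos(2)])
  have "v \<noteq> 1/2" using assms(4) by (simp add: best_reply_L_def)
  then show "outcome u v (snd sL m m') (snd \<tau> m' m) = (if 1/2 < u \<and> 1/2 < v then u else 1 - u)"
    using m m' assms(2) distinct_messages
    by (cases "u \<le> 1/2"; cases "v < 1/2") (auto simp: snd_sigma_L xi_L_def outcome_def)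
qed

lemma payoff_uv_best_reply_L_self:
  assumes "is_strategy \<tau>" "u \<in> {0..1}" "v \<in> {0..1}" "best_reply_L \<tau> u" "best_reply_L \<tau> v"
  shows "payoff_uv \<tau> \<tau> u v \<le> (if 1/2 < u \<and> 1/2 < v then u else 1 - u)"
proof (rule payoff_uv_le_if_outcomes_le[OF assms(1,1-3)])
  fix m m' assume "0 < fst \<tau> u m" "0 < fst \<tau> v m'"
  then have m: "if u < 1/2 then m \<noteq> mR else m = mR"
    and m': "if v < 1/2 then m' \<noteq> mR \<and> v \<le> snd \<tau> m' mR else m' = mR"
    using best_reply_L_support[OF assms(4), of m] best_reply_L_support[OF assms(5), of m']
    by (simp_all split: if_splits)
  have "u \<noteq> 1/2" "v \<noteq> 1/2" using assms(4,5) by (simp_all add: best_reply_L_def)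
  then show "outcome u v (snd \<tau> m m') (snd \<tau> m' m) \<le> (if 1/2 < u \<and> 1/2 < v then u else 1 - u)"
    using m m' assms(2) outcome_bounds[OF assms(2), of v "snd \<tau> m m'" "snd \<tau> m' m"]
    by (cases "u < 1/2"; cases "v < 1/2") (auto simp: outcome_def)
qed

lemma neutrally_stable_sigma_L: "neutrally_stable f sL"
proof (rule neutrally_stableI[OF equilibrium_sigma_L AE_best_reply_L])
  fix \<tau> :: "'m strat" and u v :: real
  assume \<tau>: "is_strategy \<tau>" and u: "u \<in> {0..1}" and v: "v \<in> {0..1}"
  have self: "payoff_uv sL sL u v = (if 1/2 < u \<and> 1/2 < v then u else 1 - u)"
    by (rule payoff_uv_sigma_L_self[OF u v])
  show "best_reply_L \<tau> v \<Longrightarrow> payoff_uv sL \<tau> u v = payoff_uv sL sL u v"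
    unfolding self by (rule payoff_uv_sigma_L_best_reply[OF \<tau> u v])
  show "best_reply_L \<tau> u \<Longrightarrow> best_reply_L \<tau> v \<Longrightarrow> payoff_uv \<tau> \<tau> u v \<le> payoff_uv sL sL u v"
    unfolding self by (rule payoff_uv_best_reply_L_self[OF \<tau> u v])
qed

lemma best_reply_L_weights:
  assumes "UNIV = {mL, mR}" "is_strategy \<tau>" "u \<in> {0..1}" "best_reply_L \<tau> u"
  shows "fst \<tau> u m = mu_star mL mR u m"
proof -
  have "u \<noteq> 1/2" using assms(4) by (simp add: best_reply_L_def)
  have "m' = (if u \<le> 1/2 then mL else mR)" if "0 < fst \<tau> u m'" for m'
    using best_reply_L_support[OF assms(4) that] assms(1) \<open>u \<noteq> 1/2\<close>
    by (auto split: if_splits)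
  then show ?thesis
    unfolding mu_star_eq by (rule strategy_point_mass[OF assms(2,3)])
qed

lemma strat_equiv_sigma_L:
  assumes two: "UNIV = {mL, mR}" and \<tau>: "is_strategy \<tau>"
    and ae: "AE u in type_space. best_reply_L \<tau> u"
  shows "strat_equiv f \<tau> sL"
proof -
  have ae_lborel: "AE u in lborel. u \<in> {0..1} \<longrightarrow> best_reply_L \<tau> u"
    using ae by (simp add: AE_type_space)
  have weights: "AE u in lborel. u \<in> {0..1} \<longrightarrow> (\<forall>m. fst \<tau> u m = mu_star mL mR u m)"
    using ae_lborel by eventually_elim (auto intro: best_reply_L_weights[OF two \<tau>])
  have threshold: "snd \<tau> m m' \<in> {0..1}" for m m' by (rule strategy_threshold[OF \<tau>])
  have low: "1/2 \<le> snd \<tau> mL m'" for m'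
  proof (rule ccontr)
    assume "\<not> ?thesis"
    then obtain u where u: "snd \<tau> mL m' < u" "u < 1/2" "u \<in> {0..1} \<longrightarrow> best_reply_L \<tau> u"
      using AE_lborel_exists_between[OF ae_lborel] by (meson not_le)
    then have "u \<in> {0..1}" using threshold[of mL m'] by auto
    with u have "0 < fst \<tau> u mL"
      using best_reply_L_weights[OF two \<tau>] by (simp add: mu_star_eq)
    moreover have "m' = mL \<or> m' = mR" using two by auto
    ultimately have "u \<le> snd \<tau> mL m'"
      using u \<open>u \<in> {0..1}\<close> best_reply_L_support[of \<tau> u mL] by auto
    with u show False by simp
  qed
  have high_high: "snd \<tau> mR mR \<le> 1/2"
  proof (rule ccontr)
    assume "\<not> ?thesis"
    then obtain u where u: "1/2 < u" "u < snd \<tau> mR mR" "u \<in> {0..1} \<longrightarrow> best_reply_L \<tau> u"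
      using AE_lborel_exists_between[OF ae_lborel] by (meson not_le)
    then have "u \<in> {0..1}" using threshold[of mR mR] by auto
    with u have "0 < fst \<tau> u mR"
      using best_reply_L_weights[OF two \<tau>] by (simp add: mu_star_eq)
    with u \<open>u \<in> {0..1}\<close> have "snd \<tau> mR mR < u"
      using best_reply_L_support[of \<tau> u mR] by auto
    with u show False by simp
  qed
  have high_low: "snd \<tau> mR mL = 1"
  proof (rule ccontr)
    assume "\<not> ?thesis"
    then have "max (snd \<tau> mR mL) (1/2) < 1" using threshold[of mR mL] by auto
    then obtain u where u: "max (snd \<tau> mR mL) (1/2) < u" "u < 1" "u \<in> {0..1} \<longrightarrow> best_reply_L \<tau> u"
      using AE_lborel_exists_between[OF ae_lborel] by blast
    then have "u \<in> {0..1}" by auto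
    with u have "0 < fst \<tau> u mR"
      using best_reply_L_weights[OF two \<tau>] by (simp add: mu_star_eq)
    with u \<open>u \<in> {0..1}\<close> have "u \<le> snd \<tau> mR mL"
      using best_reply_L_support[of \<tau> u mR] by auto
    with u show False by simp
  qed
  have "Fm f (fst \<tau>) m (snd \<tau> m m') = Fm f (fst \<tau>) m (snd sL m m')" for m m'
  proof -
    consider "m = mL" | "m = mR" "m' = mR" | "m = mR" "m' = mL" using two by auto
    then show ?thesis
    proof cases
      case 1
      have "AE u in lborel. snd \<tau> mL m' < u \<and> u \<le> 1 \<longrightarrow> fst \<tau> u mL = 0"
        using weights by eventually_elim (use low[of m'] distinct_messages in \<open>auto simp: mu_star_eq\<close>)
      with 1 show ?thesis
        using threshold[of mL m'] distinct_messages
        by (simp add: Fm_eq_if_no_weight_between[OF \<tau>] snd_sigma_L xi_L_def)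
    next
      case 2
      have "AE u in lborel. 0 < u \<and> u \<le> snd \<tau> mR mR \<longrightarrow> fst \<tau> u mR = 0"
        using weights by eventually_elim (use high_high distinct_messages in \<open>auto simp: mu_star_eq\<close>)
      with 2 show ?thesis
        using threshold[of mR mR] high_high
        by (simp add: Fm_eq_if_no_weight_between[OF \<tau>] snd_sigma_L xi_L_def)
    next
      case 3
      then show ?thesis using high_low distinct_messages by (simp add: snd_sigma_L xi_L_def)
    qed
  qed
  moreover have "AE u in density lborel (\<lambda>u. ennreal (f u * indicator {0..1} u)). \<forall>m. fst \<tau> u m = fst sL u m"
    using weights by (intro AE_type_distribution) (simp add: AE_type_space sigma_L_def)
  ultimately show ?thesis by (simp add: strat_equiv_def)
qed

subsection \<open>The strategy \<sigma>_R\<close>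

abbreviation "sR \<equiv> sigma_R mL mR"

lemma snd_sigma_R: "snd sR m m' = xi_R mL m m'"
  by (simp add: sigma_R_def)

lemma strategy_sigma_R: "is_strategy sR"
  unfolding sigma_R_def by (rule is_strategy_mu_star) (simp add: xi_R_def)

lemma opp_sigma_R:
  "opp_L f sR m m' = (if m' = mL \<and> m = mL then low_mass else 0)"
  "opp_R f sR m m' = (if m' = mL \<and> m \<noteq> mL then low_mass else if m' = mR then high_mass else 0)"
  using opp_threshold_zero[OF strategy_sigma_R, of m' m] opp_threshold_one[of sR m' m] distinct_messages
  by (cases "m' = mL \<and> m = mL"; auto simp: sigma_R_def xi_R_def mubar_mu_star)+

lemma msg_value_sigma_R:
  "msg_value f \<tau> sR u m =
     low_mass * (if m = mL then (1 - u) * of_bool (u \<le> snd \<tau> mL mL) else u * of_bool (snd \<tau> m mL < u)) +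
     high_mass * (u * of_bool (snd \<tau> m mR < u))"
  unfolding msg_value_def opp_sigma_R using distinct_messages
  by (subst sum_over_messages) auto

lemma payoff_u_sigma_R_self:
  assumes "u \<in> {0..1}"
  shows "payoff_u f sR sR u = (if u \<le> 1/2 then low_mass * (1 - u) + high_mass * u else u)"
proof -
  have "payoff_u f sR sR u = msg_value f sR sR u (if u \<le> 1/2 then mL else mR)"
    by (rule payoff_u_mu_star[OF strategy_sigma_R _ assms]) (simp add: sigma_R_def)
  also have "\<dots> = (if u \<le> 1/2 then low_mass * (1 - u) + high_mass * u else u)"
    unfolding msg_value_sigma_R snd_sigma_R xi_R_def
    using assms distinct_messages by (auto simp: high_mass_eq algebra_simps of_bool_def)
  finally show ?thesis .
qed

lemma msg_value_sigma_R_le: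
  assumes "u \<in> {0..1}"
  shows "msg_value f \<tau> sR u m \<le> payoff_u f sR sR u"
proof -
  have "(if m = mL then (1 - u) * of_bool (u \<le> snd \<tau> mL mL) else u * of_bool (snd \<tau> m mL < u))
       \<le> (if u \<le> 1/2 then 1 - u else u)"
    "u * of_bool (snd \<tau> m mR < u) \<le> u"
    using assms by auto
  then have "msg_value f \<tau> sR u m \<le> low_mass * (if u \<le> 1/2 then 1 - u else u) + high_mass * u"
    unfolding msg_value_sigma_R using low_mass_pos high_mass_pos
    by (intro add_mono mult_left_mono) auto
  also have "\<dots> = payoff_u f sR sR u"
    by (simp add: payoff_u_sigma_R_self[OF assms] high_mass_eq algebra_simps)
  finally show ?thesis .
qed

lemma equilibrium_sigma_R: "equilibrium f sR"
  by (intro equilibriumI strategy_sigma_R msg_value_sigma_R_le)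

text \<open>The types 0 and 1/2 are excluded: there the best-reply conditions on the thresholds are not forced.\<close>
definition best_reply_R :: "'m strat \<Rightarrow> real \<Rightarrow> bool" where
  "best_reply_R \<tau> u \<longleftrightarrow> u \<noteq> 1/2 \<and> u \<noteq> 0 \<and>
     (\<forall>m. 0 < fst \<tau> u m \<longrightarrow>
        (if u < 1/2 then m = mL \<and> u \<le> snd \<tau> mL mL \<and> snd \<tau> mL mR < u
         else m \<noteq> mL \<and> snd \<tau> m mL < u \<and> snd \<tau> m mR < u))"

lemma best_reply_R_support:
  assumes "best_reply_R \<tau> u" "0 < fst \<tau> u m"
  shows "if u < 1/2 then m = mL \<and> u \<le> snd \<tau> mL mL \<and> snd \<tau> mL mR < u
         else m \<noteq> mL \<and> snd \<tau> m mL < u \<and> snd \<tau> m mR < u"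
  using assms unfolding best_reply_R_def by blast

lemma best_reply_R_message:
  assumes "u \<in> {0..1}" "u \<noteq> 1/2" "u \<noteq> 0" "msg_value f \<tau> sR u m = payoff_u f sR sR u"
  shows "if u < 1/2 then m = mL \<and> u \<le> snd \<tau> mL mL \<and> snd \<tau> mL mR < u
         else m \<noteq> mL \<and> snd \<tau> m mL < u \<and> snd \<tau> m mR < u"
proof -
  define A where "A = (if m = mL then (1 - u) * of_bool (u \<le> snd \<tau> mL mL) else u * of_bool (snd \<tau> m mL < u))"
  define A\<^sub>0 where "A\<^sub>0 = (if u \<le> 1/2 then 1 - u else u)"
  define B where "B = u * of_bool (snd \<tau> m mR < u)"
  have "A \<le> A\<^sub>0" "B \<le> u" using assms(1) by (auto simp: A_def A\<^sub>0_def B_def)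
  moreover have "low_mass * A + high_mass * B = low_mass * A\<^sub>0 + high_mass * u"
    using assms(4) unfolding msg_value_sigma_R payoff_u_sigma_R_self[OF assms(1)] A_def A\<^sub>0_def B_def
    by (simp add: high_mass_eq algebra_simps)
  ultimately have "A = A\<^sub>0" "B = u"
    using weighted_sum_eq_max[OF low_mass_pos high_mass_pos] by blast+
  then show ?thesis
    using assms(1-3) by (auto simp: A_def A\<^sub>0_def B_def of_bool_def split: if_splits)
qed

lemma AE_best_reply_R:
  assumes "is_strategy \<tau>" "AE u in type_space. payoff_u f \<tau> sR u = payoff_u f sR sR u"
  shows "AE u in type_space. best_reply_R \<tau> u"
  using assms(2) AE_lborel_singleton[where c = "1/2::real"] AE_lborel_singleton[where c = "0::real"]
  unfolding AE_type_space
proof eventually_elim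
  case (elim u)
  show ?case
  proof
    assume u: "u \<in> {0..1}"
    show "best_reply_R \<tau> u"
      unfolding best_reply_R_def
    proof (intro conjI allI impI)
      fix m assume "0 < fst \<tau> u m"
      with elim u show "if u < 1/2 then m = mL \<and> u \<le> snd \<tau> mL mL \<and> snd \<tau> mL mR < u
          else m \<noteq> mL \<and> snd \<tau> m mL < u \<and> snd \<tau> m mR < u"
        by (intro best_reply_R_message msg_value_eq_of_best_reply[OF assms(1) strategy_sigma_R]
            msg_value_sigma_R_le) auto
    qed (use elim in auto)
  qed
qed

lemma payoff_uv_sigma_R_self:
  assumes "u \<in> {0..1}" "v \<in> {0..1}" "v \<noteq> 0"
  shows "payoff_uv sR sR u v = (if u \<le> 1/2 \<and> v \<le> 1/2 then 1 - u else u)"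
  using assms distinct_messages
  by (intro payoff_uv_eq_if_outcomes_eq[OF strategy_sigma_R strategy_sigma_R])
    (auto simp: sigma_R_def mu_star_eq xi_R_def outcome_def)

lemma payoff_uv_sigma_R_best_reply:
  assumes "is_strategy \<tau>" "u \<in> {0..1}" "v \<in> {0..1}" "best_reply_R \<tau> v"
  shows "payoff_uv sR \<tau> u v = (if u \<le> 1/2 \<and> v \<le> 1/2 then 1 - u else u)"
proof (rule payoff_uv_eq_if_outcomes_eq[OF strategy_sigma_R assms(1-3)])
  fix m m' assume pos: "0 < fst sR u m" "0 < fst \<tau> v m'"
  have m: "m = (if u \<le> 1/2 then mL else mR)"
    using pos(1) by (intro mu_star_pos) (simp add: sigma_R_def)
  have m': "if v < 1/2 then m' = mL \<and> v \<le> snd \<tau> mL mL \<and> snd \<tau> mL mR < v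
      else m' \<noteq> mL \<and> snd \<tau> m' mL < v \<and> snd \<tau> m' mR < v"
    by (rule best_reply_R_support[OF assms(4) pos(2)])
  have "v \<noteq> 1/2" using assms(4) by (simp add: best_reply_R_def)
  then show "outcome u v (snd sR m m') (snd \<tau> m' m) = (if u \<le> 1/2 \<and> v \<le> 1/2 then 1 - u else u)"
    using m m' assms(2) distinct_messages
    by (cases "u \<le> 1/2"; cases "v < 1/2") (auto simp: snd_sigma_R xi_R_def outcome_def)
qed

lemma payoff_uv_best_reply_R_self:
  assumes "is_strategy \<tau>" "u \<in> {0..1}" "v \<in> {0..1}" "best_reply_R \<tau> u" "best_reply_R \<tau> v"
  shows "payoff_uv \<tau> \<tau> u v \<le> (if u \<le> 1/2 \<and> v \<le> 1/2 then 1 - u else u)"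
proof (rule payoff_uv_le_if_outcomes_le[OF assms(1,1-3)])
  fix m m' assume "0 < fst \<tau> u m" "0 < fst \<tau> v m'"
  then have m: "if u < 1/2 then m = mL else m \<noteq> mL"
    and m': "if v < 1/2 then m' = mL else m' \<noteq> mL \<and> snd \<tau> m' mL < v"
    using best_reply_R_support[OF assms(4), of m] best_reply_R_support[OF assms(5), of m']
    by (simp_all split: if_splits)
  have "u \<noteq> 1/2" "v \<noteq> 1/2" using assms(4,5) by (simp_all add: best_reply_R_def)
  then show "outcome u v (snd \<tau> m m') (snd \<tau> m' m) \<le> (if u \<le> 1/2 \<and> v \<le> 1/2 then 1 - u else u)"
    using m m' assms(2) outcome_bounds[OF assms(2), of v "snd \<tau> m m'" "snd \<tau> m' m"]
    by (cases "u < 1/2"; cases "v < 1/2") (auto simp: outcome_def)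
qed

lemma neutrally_stable_sigma_R: "neutrally_stable f sR"
proof (rule neutrally_stableI[OF equilibrium_sigma_R AE_best_reply_R])
  fix \<tau> :: "'m strat" and u v :: real
  assume \<tau>: "is_strategy \<tau>" and u: "u \<in> {0..1}" and v: "v \<in> {0..1}"
  assume v_best: "best_reply_R \<tau> v"
  then have self: "payoff_uv sR sR u v = (if u \<le> 1/2 \<and> v \<le> 1/2 then 1 - u else u)"
    using u v by (intro payoff_uv_sigma_R_self) (simp_all add: best_reply_R_def)
  show "payoff_uv sR \<tau> u v = payoff_uv sR sR u v"
    unfolding self by (rule payoff_uv_sigma_R_best_reply[OF \<tau> u v v_best])
  show "best_reply_R \<tau> u \<Longrightarrow> payoff_uv \<tau> \<tau> u v \<le> payoff_uv sR sR u v"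
    unfolding self by (rule payoff_uv_best_reply_R_self[OF \<tau> u v _ v_best])
qed

lemma best_reply_R_weights:
  assumes "UNIV = {mL, mR}" "is_strategy \<tau>" "u \<in> {0..1}" "best_reply_R \<tau> u"
  shows "fst \<tau> u m = mu_star mL mR u m"
proof -
  have "u \<noteq> 1/2" using assms(4) by (simp add: best_reply_R_def)
  have "m' = (if u \<le> 1/2 then mL else mR)" if "0 < fst \<tau> u m'" for m'
    using best_reply_R_support[OF assms(4) that] assms(1) \<open>u \<noteq> 1/2\<close>
    by (auto split: if_splits)
  then show ?thesis
    unfolding mu_star_eq by (rule strategy_point_mass[OF assms(2,3)])
qed

lemma strat_equiv_sigma_R:
  assumes two: "UNIV = {mL, mR}" and \<tau>: "is_strategy \<tau>"
    and ae: "AE u in type_space. best_reply_R \<tau> u"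
  shows "strat_equiv f \<tau> sR"
proof -
  have ae_lborel: "AE u in lborel. u \<in> {0..1} \<longrightarrow> best_reply_R \<tau> u"
    using ae by (simp add: AE_type_space)
  have weights: "AE u in lborel. u \<in> {0..1} \<longrightarrow> (\<forall>m. fst \<tau> u m = mu_star mL mR u m)"
    using ae_lborel by eventually_elim (auto intro: best_reply_R_weights[OF two \<tau>])
  have threshold: "snd \<tau> m m' \<in> {0..1}" for m m' by (rule strategy_threshold[OF \<tau>])
  have low_low: "1/2 \<le> snd \<tau> mL mL"
  proof (rule ccontr)
    assume "\<not> ?thesis"
    then obtain u where u: "snd \<tau> mL mL < u" "u < 1/2" "u \<in> {0..1} \<longrightarrow> best_reply_R \<tau> u"
      using AE_lborel_exists_between[OF ae_lborel] by (meson not_le)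
    then have "u \<in> {0..1}" using threshold[of mL mL] by auto
    with u have "0 < fst \<tau> u mL"
      using best_reply_R_weights[OF two \<tau>] by (simp add: mu_star_eq)
    with u \<open>u \<in> {0..1}\<close> have "u \<le> snd \<tau> mL mL"
      using best_reply_R_support[of \<tau> u mL] by auto
    with u show False by simp
  qed
  have low_high: "snd \<tau> mL mR = 0"
  proof (rule ccontr)
    assume "\<not> ?thesis"
    then have "0 < min (snd \<tau> mL mR) (1/2)" using threshold[of mL mR] by auto
    then obtain u where u: "0 < u" "u < min (snd \<tau> mL mR) (1/2)" "u \<in> {0..1} \<longrightarrow> best_reply_R \<tau> u"
      using AE_lborel_exists_between[OF ae_lborel] by blast
    then have "u \<in> {0..1}" by auto
    with u have "0 < fst \<tau> u mL"
      using best_reply_R_weights[OF two \<tau>] by (simp add: mu_star_eq)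
    with u \<open>u \<in> {0..1}\<close> have "snd \<tau> mL mR < u"
      using best_reply_R_support[of \<tau> u mL] by auto
    with u show False by simp
  qed
  have high: "snd \<tau> mR m' \<le> 1/2" for m'
  proof (rule ccontr)
    assume "\<not> ?thesis"
    then obtain u where u: "1/2 < u" "u < snd \<tau> mR m'" "u \<in> {0..1} \<longrightarrow> best_reply_R \<tau> u"
      using AE_lborel_exists_between[OF ae_lborel] by (meson not_le)
    then have "u \<in> {0..1}" using threshold[of mR m'] by auto
    with u have "0 < fst \<tau> u mR"
      using best_reply_R_weights[OF two \<tau>] distinct_messages by (simp add: mu_star_eq)
    moreover have "m' = mL \<or> m' = mR" using two by auto
    ultimately have "snd \<tau> mR m' < u"
      using u \<open>u \<in> {0..1}\<close> best_reply_R_support[of \<tau> u mR] by auto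
    with u show False by simp
  qed
  have "Fm f (fst \<tau>) m (snd \<tau> m m') = Fm f (fst \<tau>) m (snd sR m m')" for m m'
  proof -
    consider "m = mL" "m' = mL" | "m = mL" "m' = mR" | "m = mR" using two by auto
    then show ?thesis
    proof cases
      case 1
      have "AE u in lborel. snd \<tau> mL mL < u \<and> u \<le> 1 \<longrightarrow> fst \<tau> u mL = 0"
        using weights by eventually_elim (use low_low distinct_messages in \<open>auto simp: mu_star_eq\<close>)
      with 1 show ?thesis
        using threshold[of mL mL] by (simp add: Fm_eq_if_no_weight_between[OF \<tau>] snd_sigma_R xi_R_def)
    next
      case 2
      then show ?thesis using low_high distinct_messages by (simp add: snd_sigma_R xi_R_def)
    next
      case 3
      have "AE u in lborel. 0 < u \<and> u \<le> snd \<tau> mR m' \<longrightarrow> fst \<tau> u mR = 0"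
        using weights AE_lborel_singleton[where c = "1/2::real"]
        by eventually_elim (use high[of m'] distinct_messages in \<open>auto simp: mu_star_eq\<close>)
      with 3 show ?thesis
        using threshold[of mR m'] high[of m'] distinct_messages
        by (simp add: Fm_eq_if_no_weight_between[OF \<tau>] snd_sigma_R xi_R_def)
    qed
  qed
  moreover have "AE u in density lborel (\<lambda>u. ennreal (f u * indicator {0..1} u)). \<forall>m. fst \<tau> u m = fst sR u m"
    using weights by (intro AE_type_distribution) (simp add: AE_type_space sigma_R_def)
  ultimately show ?thesis by (simp add: strat_equiv_def)
qed

end

theorem mainTheorem11:
  fixes f :: "real \<Rightarrow> real" and mL mR :: "'m::finite"
  assumes "mL \<noteq> mR"
    and "set_integrable lborel {0..1} f"
    and "\<forall>u\<in>{0..1}. f u > 0"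
    and "(LINT u:{0..1}|lborel. f u) = 1"
  shows "neutrally_stable f (sigma_L mL mR) \<and> neutrally_stable f (sigma_R mL mR) \<and>
         ((UNIV :: 'm set) = {mL, mR} \<longrightarrow>
            evolutionarily_stable f (sigma_L mL mR) \<and> evolutionarily_stable f (sigma_R mL mR))"
proof -
  interpret signalling_game f mL mR
    using assms by unfold_locales auto
  have "evolutionarily_stable f (sigma_L mL mR)" "evolutionarily_stable f (sigma_R mL mR)"
    if "(UNIV :: 'm set) = {mL, mR}"
    using equilibrium_sigma_L equilibrium_sigma_R
      strat_equiv_sigma_L[OF that _ AE_best_reply_L[OF _ best_reply_AE[OF equilibrium_sigma_L]]]
      strat_equiv_sigma_R[OF that _ AE_best_reply_R[OF _ best_reply_AE[OF equilibrium_sigma_R]]]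
    by (auto simp: evolutionarily_stable_def)
  then show ?thesis using neutrally_stable_sigma_L neutrally_stable_sigma_R by blast
qed

end
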